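(* Let $G$ be the general event structure with events $\{a,b,c,d,e\}$, in which a finite set is consistent iff it does not contain both $a$ and $b$, and whose enabling relation is the least one (closed under consistent supersets of the left-hand side) with $\emptyset\vdash a$, $\emptyset\vdash b$, $\emptyset\vdash c$, $\emptyset\vdash d$, $\{b,c\}\vdash e$ and $\{d\}\vdash e$. Let $\mathcal H=\{x\setminus\{b\}\mid x\text{ a configuration of }G\}$. Then there is no general event structure with event set $\{a,c,d,e\}$ whose set of configurations is exactly $\mathcal H$.
   Context: A general event structure is $(E,\mathrm{Con},\vdash)$ with $\mathrm{Con}$ a nonempty subset-closed family of finite subsets of $E$ and $\vdash\subseteq\mathrm{Con}\times E$ such that $Y\in\mathrm{Con}$, $X\subseteq Y$, $X\vdash e$ imply $Y\vdash e$. A configuration is a subset $x\subseteq E$ that is consistent (all finite subsets in $\mathrm{Con}$) and secured (for each $e\in x$ there are $e_1,\dots,e_n\in x$ with $e_n=e$ and $\{e_1,\dots,e_{i-1}\}\vdash e_i$ for every $i\le n$). *)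

theory Defs
  imports Main
begin

definition ges :: "'a set \<Rightarrow> 'a set set \<Rightarrow> ('a set \<Rightarrow> 'a \<Rightarrow> bool) \<Rightarrow> bool" where
  "ges E Con ent \<longleftrightarrow>
     Con \<noteq> {} \<and>
     (\<forall>X\<in>Con. finite X \<and> X \<subseteq> E) \<and>
     (\<forall>Y\<in>Con. \<forall>X. X \<subseteq> Y \<longrightarrow> X \<in> Con) \<and>
     (\<forall>X e. ent X e \<longrightarrow> X \<in> Con \<and> e \<in> E) \<and>
     (\<forall>X Y e. Y \<in> Con \<longrightarrow> X \<subseteq> Y \<longrightarrow> ent X e \<longrightarrow> ent Y e)"

definition consistent :: "'a set set \<Rightarrow> 'a set \<Rightarrow> bool" where
  "consistent Con x \<longleftrightarrow> (\<forall>X. finite X \<longrightarrow> X \<subseteq> x \<longrightarrow> X \<in> Con)"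

definition secured :: "('a set \<Rightarrow> 'a \<Rightarrow> bool) \<Rightarrow> 'a set \<Rightarrow> bool" where
  "secured ent x \<longleftrightarrow>
     (\<forall>e\<in>x. \<exists>es. es \<noteq> [] \<and> last es = e \<and> set es \<subseteq> x \<and>
        (\<forall>i<length es. ent (set (take i es)) (es ! i)))"

definition configs :: "'a set \<Rightarrow> 'a set set \<Rightarrow> ('a set \<Rightarrow> 'a \<Rightarrow> bool) \<Rightarrow> 'a set set" where
  "configs E Con ent = {x. x \<subseteq> E \<and> consistent Con x \<and> secured ent x}"

datatype ev = a | b | c | d | e

definition ConG :: "ev set set" where
  "ConG = {X. finite X \<and> \<not> (a \<in> X \<and> b \<in> X)}"

text \<open>The least enabling relation closed under consistent supersets containing
  the generators {} |- a, {} |- b, {} |- c, {} |- d, {b,c} |- e, {d} |- e.\<close>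
definition entG :: "ev set \<Rightarrow> ev \<Rightarrow> bool" where
  "entG X y \<longleftrightarrow> X \<in> ConG \<and>
     (y \<in> {a, b, c, d} \<or> (y = e \<and> ({b, c} \<subseteq> X \<or> {d} \<subseteq> X)))"

definition H :: "ev set set" where
  "H = (\<lambda>x. x - {b}) ` configs UNIV ConG entG"

end

theory Submission
  imports Defs
begin

text \<open>Configurations of any general event structure are closed under unions that are bounded
  above by a configuration: the union stays secured, and it inherits consistency from the bound.
  In \<open>H\<close> the sets {a,c} and {c,e} are configurations bounded by {a,c,d,e}, yet their union
  {a,c,e} is not in \<open>H\<close>: e occurs in it without b or d, so no event of G could have enabled it.\<close>

lemma secured_set_if_enabling_sequence:
  assumes "\<forall>i<length es. ent (set (take i es)) (es ! i)"
  shows "secured ent (set es)"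
  unfolding secured_def
proof
  fix y assume "y \<in> set es"
  then obtain i where i: "i < length es" "es ! i = y" by (metis in_set_conv_nth)
  show "\<exists>es'. es' \<noteq> [] \<and> last es' = y \<and> set es' \<subseteq> set es \<and>
        (\<forall>j<length es'. ent (set (take j es')) (es' ! j))"
  proof (intro exI conjI)
    show "take (Suc i) es \<noteq> []" using i by auto
    show "last (take (Suc i) es) = y" using i by (simp add: take_Suc_conv_app_nth)
    show "set (take (Suc i) es) \<subseteq> set es" by (rule set_take_subset)
    show "\<forall>j<length (take (Suc i) es). ent (set (take j (take (Suc i) es))) (take (Suc i) es ! j)"
      using assms i by (auto simp: min_def)
  qed
qed

lemma secured_enabled_by_subset:
  assumes "secured ent x" "y \<in> x"
  obtains X where "X \<subseteq> x" "ent X y"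
proof -
  obtain es where es: "es \<noteq> []" "last es = y" "set es \<subseteq> x"
    "\<forall>i<length es. ent (set (take i es)) (es ! i)"
    using assms unfolding secured_def by blast
  let ?i = "length es - 1"
  have "ent (set (take ?i es)) y"
    using es by (metis diff_less last_conv_nth length_greater_0_conv zero_less_one)
  moreover have "set (take ?i es) \<subseteq> x" using es(3) set_take_subset by fast
  ultimately show thesis using that by blast
qed

lemma secured_Un:
  assumes "secured ent x" "secured ent y"
  shows "secured ent (x \<union> y)"
  unfolding secured_def
proof
  fix z assume "z \<in> x \<union> y"
  then obtain s where "s \<in> {x, y}" "z \<in> s" by blast
  with assms obtain es where "es \<noteq> []" "last es = z" "set es \<subseteq> s"
    "\<forall>i<length es. ent (set (take i es)) (es ! i)"
    unfolding secured_def by blast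
  with \<open>s \<in> {x, y}\<close> show "\<exists>es. es \<noteq> [] \<and> last es = z \<and> set es \<subseteq> x \<union> y \<and>
      (\<forall>i<length es. ent (set (take i es)) (es ! i))"
    by blast
qed

lemma consistent_subset: "consistent Con y \<Longrightarrow> x \<subseteq> y \<Longrightarrow> consistent Con x"
  unfolding consistent_def by blast

lemma configs_Un_bounded:
  assumes "x \<in> configs E Con ent" "y \<in> configs E Con ent" "z \<in> configs E Con ent"
    and "x \<union> y \<subseteq> z"
  shows "x \<union> y \<in> configs E Con ent"
proof -
  have "secured ent (x \<union> y)" using assms(1,2) secured_Un unfolding configs_def by blast
  moreover have "consistent Con (x \<union> y)"
    using assms(3,4) consistent_subset unfolding configs_def by blast
  moreover have "x \<union> y \<subseteq> E" using assms(3,4) unfolding configs_def by blast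
  ultimately show ?thesis unfolding configs_def by blast
qed

lemma enabling_sequence_in_H:
  assumes "\<forall>i<length es. entG (set (take i es)) (es ! i)" "\<not> (a \<in> set es \<and> b \<in> set es)"
  shows "set es - {b} \<in> H"
proof -
  have "consistent ConG (set es)" using assms(2) unfolding consistent_def ConG_def by auto
  then show ?thesis
    using secured_set_if_enabling_sequence[OF assms(1)] unfolding H_def configs_def by blast
qed

lemma ac_in_H: "{a, c} \<in> H"
  using enabling_sequence_in_H[of "[a, c]"] by (auto simp: entG_def ConG_def less_Suc_eq nth_Cons')

lemma ce_in_H: "{c, e} \<in> H"
proof -
  have "set [b, c, e] - {b} \<in> H"
    by (rule enabling_sequence_in_H) (auto simp: entG_def ConG_def less_Suc_eq nth_Cons')
  then show ?thesis by auto
qed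

lemma acde_in_H: "{a, c, d, e} \<in> H"
  using enabling_sequence_in_H[of "[a, c, d, e]"]
  by (auto simp: entG_def ConG_def less_Suc_eq nth_Cons')

lemma b_notin_config_with_a:
  assumes "x \<in> configs UNIV ConG entG" "a \<in> x"
  shows "b \<notin> x"
proof
  assume "b \<in> x"
  with assms have "{a, b} \<in> ConG" unfolding configs_def consistent_def by auto
  then show False unfolding ConG_def by simp
qed

lemma ace_notin_H: "{a, c, e} \<notin> H"
proof
  assume "{a, c, e} \<in> H"
  then obtain x where x: "x \<in> configs UNIV ConG entG" "x - {b} = {a, c, e}"
    unfolding H_def by (auto simp del: insert_Diff_single)
  with b_notin_config_with_a have "x = {a, c, e}" by blast
  with x(1) have "secured entG {a, c, e}" unfolding configs_def by simp
  moreover have "e \<in> {a, c, e}" by simp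
  ultimately obtain X where "X \<subseteq> {a, c, e}" "entG X e"
    by (rule secured_enabled_by_subset)
  then show False unfolding entG_def by auto
qed

theorem mainTheorem10:
  shows "\<not> (\<exists>Con ent. ges {a, c, d, e} Con ent \<and> configs {a, c, d, e} Con ent = H)"
proof
  assume "\<exists>Con ent. ges {a, c, d, e} Con ent \<and> configs {a, c, d, e} Con ent = H"
  then obtain Con ent where eq: "configs {a, c, d, e} Con ent = H" by blast
  have "{a, c} \<union> {c, e} \<in> configs {a, c, d, e} Con ent"
    by (rule configs_Un_bounded[where z = "{a, c, d, e}"]) (auto simp: eq ac_in_H ce_in_H acde_in_H)
  then have "{a, c, e} \<in> H" by (simp add: eq insert_commute)
  with ace_notin_H show False by contradiction
qed

end
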